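(* Suppose that $\mathcal{L} = L\mathbb{Z}^{2d} \subseteq \mathbb{R}^{2d}$ is a lattice whose generating matrix has rational entries, $L \in \mathrm{GL}_{2d}(\mathbb{Q})$. Then for every real-valued window function $g \in L^2(\mathbb{R}^d,\mathbb{R})$ there exist two real-valued functions $f_1,f_2 \in L^2(\mathbb{R}^d,\mathbb{R})$ such that $|V_g f_1(z)| = |V_g f_2(z)|$ for all $z \in \mathcal{L}$ and there is no $\nu\in\mathbb{C}$ with $|\nu|=1$ and $f_1=\nu f_2$.
   Context: $V_gf(x,\omega)=\int_{\mathbb{R}^d} f(t)\overline{g(t-x)}e^{-2\pi i \omega\cdot t}\,dt$ is the short-time Fourier transform. $L^2(\mathbb{R}^d,\mathbb{R})$ denotes the real-valued functions in $L^2(\mathbb{R}^d)$. *)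

theory Defs
  imports "HOL-Analysis.Analysis"
begin

definition stft :: "(real^'n \<Rightarrow> complex) \<Rightarrow> (real^'n \<Rightarrow> complex) \<Rightarrow> real^'n \<Rightarrow> real^'n \<Rightarrow> complex" where
  "stft g f x w = (LINT t|lebesgue. f t * cnj (g (t - x)) * exp (- 2 * complex_of_real pi * \<i> * complex_of_real (w \<bullet> t)))"

definition L2_real :: "(real^'n \<Rightarrow> real) \<Rightarrow> bool" where
  "L2_real f \<longleftrightarrow> f \<in> borel_measurable lebesgue \<and> integrable lebesgue (\<lambda>t. (f t)\<^sup>2)"

definition xpart :: "real^('n + 'n) \<Rightarrow> real^'n" where
  "xpart z = (\<chi> i. z $ Inl i)"

definition wpart :: "real^('n + 'n) \<Rightarrow> real^'n" where
  "wpart z = (\<chi> i. z $ Inr i)"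

end

theory Submission
  imports Defs
begin

(*
  Fix a coordinate i and take N > 0 with N times the i-th row of L integral (a common
  denominator), so that every lattice point z = (x, w) satisfies N x_i \<in> \<int>.  The phase
  s t = sin (2 pi N t_i) is then odd under the reflection t \<mapsto> x - t.  For
  f1 t = (1 + s t) g (-t) and f2 t = (1 - s t) g (-t) this gives
  f1 (x - t) g (-t) = f2 t g (t - x), and substituting t \<mapsto> x - t in the STFT integral
  shows V_g f1 (x, w) = e^(-2 pi i w.x) conj (V_g f2 (x, w)).  Since s \<noteq> 0 almost
  everywhere, f1 = \<nu> f2 with |\<nu>| = 1 would force g = 0 almost everywhere; for such a
  window every STFT vanishes, and the indicator of the unit cube and 0 do the job.
*)

lemma
  fixes a :: "'a::euclidean_space"
  assumes "c = 1 \<or> c = -1"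
  shows measurable_lebesgue_unit_affine: "(\<lambda>y. a + c *\<^sub>R y) \<in> lebesgue \<rightarrow>\<^sub>M lebesgue"
    and distr_lebesgue_unit_affine: "distr lebesgue lebesgue (\<lambda>y. a + c *\<^sub>R y) = lebesgue"
proof -
  have affine_eq: "(\<lambda>x. a + (\<Sum>j\<in>Basis. (c * (x \<bullet> j)) *\<^sub>R j)) = (\<lambda>y. a + c *\<^sub>R y)"
    unfolding scaleR_scaleR[symmetric] scaleR_sum_right[symmetric] euclidean_representation ..
  have c: "\<And>j. j \<in> (Basis::'a set) \<Longrightarrow> c \<noteq> 0" and "\<bar>c\<bar> = 1"
    using assms by auto
  show "(\<lambda>y. a + c *\<^sub>R y) \<in> lebesgue \<rightarrow>\<^sub>M lebesgue"
    using lebesgue_affine_measurable[of "\<lambda>_. c" a, OF c] by (simp add: affine_eq)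
  have "lebesgue = density (distr lebesgue lebesgue (\<lambda>y. a + c *\<^sub>R y)) (\<lambda>_. 1)"
    using lebesgue_affine_euclidean[of "\<lambda>_. c" a, OF c] \<open>\<bar>c\<bar> = 1\<close> by (simp add: affine_eq)
  then show "distr lebesgue lebesgue (\<lambda>y. a + c *\<^sub>R y) = lebesgue"
    by (metis density_1)
qed

lemma
  fixes a :: "'a::euclidean_space"
  shows measurable_lebesgue_reflect[measurable]: "(\<lambda>y. a - y) \<in> lebesgue \<rightarrow>\<^sub>M lebesgue"
    and distr_lebesgue_reflect: "distr lebesgue lebesgue (\<lambda>y. a - y) = lebesgue"
  using measurable_lebesgue_unit_affine[of "-1" a] distr_lebesgue_unit_affine[of "-1" a] by simp_all

lemma
  fixes a :: "'a::euclidean_space"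
  shows measurable_lebesgue_translate[measurable]: "(\<lambda>y. y - a) \<in> lebesgue \<rightarrow>\<^sub>M lebesgue"
    and distr_lebesgue_translate: "distr lebesgue lebesgue (\<lambda>y. y - a) = lebesgue"
  using measurable_lebesgue_unit_affine[of 1 "-a"] distr_lebesgue_unit_affine[of 1 "-a"] by simp_all

lemma integral_lebesgue_reflect:
  fixes F :: "'a::euclidean_space \<Rightarrow> 'b::{banach, second_countable_topology}"
  assumes "F \<in> borel_measurable lebesgue"
  shows "(\<integral>t. F (a - t) \<partial>lebesgue) = (\<integral>t. F t \<partial>lebesgue)"
  using integral_distr[OF measurable_lebesgue_reflect assms, of a]
  by (simp add: distr_lebesgue_reflect)

lemma integrable_lebesgue_reflect_iff:
  fixes F :: "'a::euclidean_space \<Rightarrow> 'b::{banach, second_countable_topology}"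
  assumes "F \<in> borel_measurable lebesgue"
  shows "integrable lebesgue (\<lambda>t. F (a - t)) \<longleftrightarrow> integrable lebesgue F"
  using integrable_distr_eq[OF measurable_lebesgue_reflect assms, of a]
  by (simp add: distr_lebesgue_reflect)

lemma AE_lebesgue_reflect_iff:
  fixes a :: "'a::euclidean_space"
  assumes [measurable]: "Measurable.pred lebesgue P"
  shows "(AE t in lebesgue. P (a - t)) \<longleftrightarrow> (AE t in lebesgue. P t)"
proof -
  have "{t \<in> space lebesgue. P t} \<in> sets lebesgue"
    by measurable
  from AE_distr_iff[OF measurable_lebesgue_reflect[of a] this] show ?thesis
    unfolding distr_lebesgue_reflect by (rule sym)
qed

lemma AE_lebesgue_translate_iff:
  fixes a :: "'a::euclidean_space"
  assumes [measurable]: "Measurable.pred lebesgue P"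
  shows "(AE t in lebesgue. P (t - a)) \<longleftrightarrow> (AE t in lebesgue. P t)"
proof -
  have "{t \<in> space lebesgue. P t} \<in> sets lebesgue"
    by measurable
  from AE_distr_iff[OF measurable_lebesgue_translate[of a] this] show ?thesis
    unfolding distr_lebesgue_translate by (rule sym)
qed

lemma L2_real_reflect:
  assumes "L2_real g"
  shows "L2_real (\<lambda>t. g (- t))"
proof -
  have [measurable]: "g \<in> borel_measurable lebesgue" and "integrable lebesgue (\<lambda>t. (g t)\<^sup>2)"
    using assms by (auto simp: L2_real_def)
  then have "integrable lebesgue (\<lambda>t. (g (0 - t))\<^sup>2)"
    by (subst integrable_lebesgue_reflect_iff) auto
  moreover have "(\<lambda>t. g (0 - t)) \<in> borel_measurable lebesgue"
    by measurable
  ultimately show ?thesis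
    by (simp add: L2_real_def)
qed

lemma L2_real_mult_bounded:
  assumes "L2_real h" and [measurable]: "c \<in> borel_measurable lebesgue" and "\<And>t. \<bar>c t\<bar> \<le> B"
  shows "L2_real (\<lambda>t. c t * h t)"
proof -
  have [measurable]: "h \<in> borel_measurable lebesgue" and h2: "integrable lebesgue (\<lambda>t. (h t)\<^sup>2)"
    using assms(1) by (auto simp: L2_real_def)
  have "(c t * h t)\<^sup>2 \<le> B\<^sup>2 * (h t)\<^sup>2" for t
  proof -
    have "(c t)\<^sup>2 \<le> B\<^sup>2"
      using assms(3)[of t] abs_le_square_iff[of "c t" B] by simp
    then show ?thesis
      by (simp add: power_mult_distrib mult_right_mono)
  qed
  then have "integrable lebesgue (\<lambda>t. (c t * h t)\<^sup>2)"
    by (intro Bochner_Integration.integrable_bound[OF integrable_mult_right[OF h2, of "B\<^sup>2"]]) auto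
  then show ?thesis
    by (simp add: L2_real_def)
qed

lemma L2_real_indicator:
  assumes "A \<in> fmeasurable lebesgue"
  shows "L2_real (indicator A)"
proof -
  have "integrable lebesgue (indicator A :: _ \<Rightarrow> real)"
    using assms by (intro integrable_real_indicator) (auto simp: fmeasurable_def)
  moreover have "(\<lambda>t. (indicator A t :: real)\<^sup>2) = indicator A"
    by (auto simp: indicator_def)
  ultimately show ?thesis
    by (simp add: L2_real_def)
qed

definition same_stft_magnitude ::
    "(real^'n \<Rightarrow> real) \<Rightarrow> (real^'n \<Rightarrow> real) \<Rightarrow> (real^'n \<Rightarrow> real) \<Rightarrow> real^'n \<Rightarrow> real^'n \<Rightarrow> bool" where
  "same_stft_magnitude g f1 f2 x w \<longleftrightarrow>
     cmod (stft (\<lambda>t. complex_of_real (g t)) (\<lambda>t. complex_of_real (f1 t)) x w)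
     = cmod (stft (\<lambda>t. complex_of_real (g t)) (\<lambda>t. complex_of_real (f2 t)) x w)"

definition phase_equivalent :: "('a::euclidean_space \<Rightarrow> real) \<Rightarrow> ('a \<Rightarrow> real) \<Rightarrow> bool" where
  "phase_equivalent f1 f2 \<longleftrightarrow>
     (\<exists>\<nu>::complex. cmod \<nu> = 1 \<and> (AE t in lebesgue. complex_of_real (f1 t) = \<nu> * complex_of_real (f2 t)))"

lemma stft_eq_0_if_AE_window_eq_0:
  fixes f g :: "real^'n \<Rightarrow> real"
  assumes [measurable]: "g \<in> borel_measurable lebesgue" and "AE t in lebesgue. g t = 0"
  shows "stft (\<lambda>t. complex_of_real (g t)) (\<lambda>t. complex_of_real (f t)) x w = 0"
proof -
  have "AE t in lebesgue. g (t - x) = 0"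
    using assms(2) by (subst AE_lebesgue_translate_iff) auto
  then show ?thesis
    unfolding stft_def by (intro integral_eq_zero_AE) auto
qed

lemma stft_eq_cnj_stft_if_reflection:
  fixes f1 f2 g :: "real^'n \<Rightarrow> real"
  assumes [measurable]: "f1 \<in> borel_measurable lebesgue" "g \<in> borel_measurable lebesgue"
    and reflection: "\<And>t. f1 (x - t) * g (- t) = f2 t * g (t - x)"
  shows "stft (\<lambda>t. complex_of_real (g t)) (\<lambda>t. complex_of_real (f1 t)) x w
       = exp (- 2 * complex_of_real pi * \<i> * complex_of_real (w \<bullet> x))
         * cnj (stft (\<lambda>t. complex_of_real (g t)) (\<lambda>t. complex_of_real (f2 t)) x w)"
proof -
  define E where "E = exp (- 2 * complex_of_real pi * \<i> * complex_of_real (w \<bullet> x))"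
  define I where "I f t = complex_of_real (f t) * cnj (complex_of_real (g (t - x)))
    * exp (- 2 * complex_of_real pi * \<i> * complex_of_real (w \<bullet> t))" for f t
  have [measurable]: "(\<lambda>t. exp (- 2 * complex_of_real pi * \<i> * complex_of_real (w \<bullet> t)))
      \<in> borel_measurable lebesgue"
    by (intro measurable_completion) measurable
  have "I f1 \<in> borel_measurable lebesgue"
    unfolding I_def complex_cnj_complex_of_real by measurable
  have I_reflect: "I f1 (x - t) = E * cnj (I f2 t)" for t
  proof -
    have "exp (- 2 * complex_of_real pi * \<i> * complex_of_real (w \<bullet> (x - t)))
        = E * cnj (exp (- 2 * complex_of_real pi * \<i> * complex_of_real (w \<bullet> t)))"
      unfolding E_def by (simp add: inner_diff_right exp_cnj exp_add[symmetric] algebra_simps)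
    moreover have "complex_of_real (f1 (x - t) * g (- t)) = complex_of_real (f2 t * g (t - x))"
      by (simp only: reflection)
    ultimately show ?thesis
      unfolding I_def by (simp add: algebra_simps)
  qed
  have "stft (\<lambda>t. complex_of_real (g t)) (\<lambda>t. complex_of_real (f1 t)) x w = (\<integral>t. I f1 t \<partial>lebesgue)"
    unfolding stft_def I_def ..
  also have "\<dots> = (\<integral>t. I f1 (x - t) \<partial>lebesgue)"
    using integral_lebesgue_reflect[OF \<open>I f1 \<in> _\<close>] by (rule sym)
  also have "\<dots> = E * cnj (\<integral>t. I f2 t \<partial>lebesgue)"
    by (simp add: I_reflect)
  finally show ?thesis
    unfolding stft_def E_def I_def .
qed

lemma same_stft_magnitude_if_reflection:
  fixes f1 f2 g :: "real^'n \<Rightarrow> real"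
  assumes "f1 \<in> borel_measurable lebesgue" "g \<in> borel_measurable lebesgue"
    and "\<And>t. f1 (x - t) * g (- t) = f2 t * g (t - x)"
  shows "same_stft_magnitude g f1 f2 x w"
  using stft_eq_cnj_stft_if_reflection[OF assms, of w]
  by (simp add: same_stft_magnitude_def norm_mult norm_exp_eq_Re)

lemma common_denominator:
  fixes q :: "'a::finite \<Rightarrow> real"
  assumes "\<And>j. q j \<in> \<rat>"
  obtains N :: nat where "N > 0" and "\<And>j. real N * q j \<in> \<int>"
proof -
  have "\<exists>d::nat. d > 0 \<and> real d * q j \<in> \<int>" for j
  proof -
    obtain a b where "b > 0" and "q j = of_int a / of_int b"
      using assms[of j] by (auto elim: Rats_cases')
    then have "real (nat b) * q j = of_int a"
      by simp
    with \<open>b > 0\<close> show ?thesis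
      by (intro exI[of _ "nat b"]) auto
  qed
  then obtain d :: "'a \<Rightarrow> nat" where d: "\<And>j. d j > 0" "\<And>j. real (d j) * q j \<in> \<int>"
    by metis
  have "real (prod d UNIV) * q j \<in> \<int>" for j
  proof -
    have "prod d UNIV = d j * prod d (UNIV - {j})"
      by (simp add: prod.remove)
    then have "real (prod d UNIV) * q j = real (prod d (UNIV - {j})) * (real (d j) * q j)"
      by (simp only: of_nat_mult mult_ac)
    then show ?thesis
      using Ints_mult[OF Ints_of_nat d(2)] by metis
  qed
  moreover have "prod d UNIV > 0"
    using d(1) by (simp add: prod_pos)
  ultimately show ?thesis
    using that by blast
qed

lemma Ints_mult_matrix_vector_row:
  fixes A :: "real^'n^'m" and k :: "real^'n"
  assumes "\<And>j. c * A $ r $ j \<in> \<int>" and "\<And>j. k $ j \<in> \<int>"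
  shows "c * (A *v k) $ r \<in> \<int>"
proof -
  have "c * (A *v k) $ r = (\<Sum>j\<in>UNIV. (c * A $ r $ j) * k $ j)"
    by (simp add: matrix_vector_mult_def sum_distrib_left mult.assoc)
  also have "\<dots> \<in> \<int>"
    using assms by (intro Ints_sum) (blast intro: Ints_mult)
  finally show ?thesis .
qed

lemma sin_grid_reflect:
  assumes "real N * x $ i \<in> \<int>"
  shows "sin (2 * pi * real N * (x - t) $ i) = - sin (2 * pi * real N * t $ i)"
proof -
  obtain m where "real N * x $ i = of_int m"
    using assms by (auto elim: Ints_cases)
  then have "2 * pi * real N * (x - t) $ i = 2 * pi * of_int m - 2 * pi * real N * t $ i"
    by (simp add: algebra_simps)
  then show ?thesis
    by (simp add: sin_diff)
qed

lemma AE_sin_grid_nonzero: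
  assumes "N > 0"
  shows "AE t in lebesgue. sin (2 * pi * real N * (t::real^'n) $ i) \<noteq> 0"
proof (rule AE_I')
  let ?H = "range (\<lambda>m::int. {t::real^'n. axis i 1 \<bullet> t = of_int m / (2 * real N)})"
  have "negligible (\<Union>?H)"
    by (intro negligible_countable_Union) (auto intro!: negligible_hyperplane simp: axis_eq_0_iff)
  then show "\<Union>?H \<in> null_sets lebesgue"
    by (simp add: negligible_iff_null_sets)
  show "{t \<in> space lebesgue. \<not> sin (2 * pi * real N * t $ i) \<noteq> 0} \<subseteq> \<Union>?H"
  proof
    fix t :: "real^'n"
    assume "t \<in> {t \<in> space lebesgue. \<not> sin (2 * pi * real N * t $ i) \<noteq> 0}"
    then obtain m :: int where "2 * pi * real N * t $ i = of_int m * pi"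
      by (auto simp: sin_zero_iff_int2)
    then have "t $ i = of_int m / (2 * real N)"
      using assms by (simp add: field_simps)
    then show "t \<in> \<Union>?H"
      by (auto simp: inner_axis')
  qed
qed

lemma unimodular_plus_minus_multiple:
  fixes a s :: real and \<nu> :: complex
  assumes "cmod \<nu> = 1" and "complex_of_real ((1 + s) * a) = \<nu> * complex_of_real ((1 - s) * a)"
  shows "a = 0 \<or> s = 0"
proof -
  have "cmod (complex_of_real ((1 + s) * a)) = cmod (complex_of_real ((1 - s) * a))"
    using arg_cong[OF assms(2), of cmod] assms(1) by (simp only: norm_mult mult_1_left)
  then have "\<bar>1 + s\<bar> * \<bar>a\<bar> = \<bar>1 - s\<bar> * \<bar>a\<bar>"
    by (simp only: norm_of_real abs_mult)
  then show ?thesis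
    by (auto simp: abs_if split: if_splits)
qed

lemma phase_retrieval_fails_null_window:
  fixes g :: "real^'n \<Rightarrow> real"
  assumes "g \<in> borel_measurable lebesgue" and "AE t in lebesgue. g t = 0"
  shows "\<exists>f1 f2. L2_real f1 \<and> L2_real f2 \<and> (\<forall>x w. same_stft_magnitude g f1 f2 x w)
           \<and> \<not> phase_equivalent f1 f2"
proof (intro exI conjI allI)
  let ?Q = "cbox (0::real^'n) One"
  show "L2_real (indicator ?Q)"
    by (rule L2_real_indicator) simp
  show "L2_real (\<lambda>_. 0)"
    by (simp add: L2_real_def)
  show "same_stft_magnitude g (indicator ?Q) (\<lambda>_. 0) x w" for x w
    using stft_eq_0_if_AE_window_eq_0[OF assms, of "indicator ?Q" x w]
      stft_eq_0_if_AE_window_eq_0[OF assms, of "\<lambda>_. 0" x w]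
    by (simp add: same_stft_magnitude_def)
  show "\<not> phase_equivalent (indicator ?Q) (\<lambda>_. 0)"
  proof
    assume "phase_equivalent (indicator ?Q) (\<lambda>_. 0)"
    then have "AE t in lebesgue. indicator ?Q t = (0::real)"
      by (simp add: phase_equivalent_def)
    then have "(\<integral>t. indicator ?Q t \<partial>lebesgue) = (0::real)"
      by (rule integral_eq_zero_AE)
    then show False
      by simp
  qed
qed

lemma phase_retrieval_fails_on_grid_nonnull_window:
  fixes g :: "real^'n \<Rightarrow> real" and i :: 'n
  assumes "L2_real g" and "\<not> (AE t in lebesgue. g t = 0)" and "N > 0"
  defines "s \<equiv> \<lambda>t. sin (2 * pi * real N * t $ i)"
  shows "\<exists>f1 f2. L2_real f1 \<and> L2_real f2
           \<and> (\<forall>x w. real N * x $ i \<in> \<int> \<longrightarrow> same_stft_magnitude g f1 f2 x w)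
           \<and> \<not> phase_equivalent f1 f2"
proof (intro exI conjI allI impI)
  have [measurable]: "g \<in> borel_measurable lebesgue"
    using assms(1) by (simp add: L2_real_def)
  have [measurable]: "s \<in> borel_measurable lebesgue"
    unfolding s_def by (intro measurable_completion) measurable
  have s_bound: "\<bar>s t\<bar> \<le> 1" for t
    by (simp add: s_def)
  have "\<bar>1 + s t\<bar> \<le> 2" and "\<bar>1 - s t\<bar> \<le> 2" for t
    using s_bound[of t] by (auto simp: abs_le_iff)
  then show L2: "L2_real (\<lambda>t. (1 + s t) * g (- t))" "L2_real (\<lambda>t. (1 - s t) * g (- t))"
    by (auto intro!: L2_real_mult_bounded L2_real_reflect assms(1))
  show "same_stft_magnitude g (\<lambda>t. (1 + s t) * g (- t)) (\<lambda>t. (1 - s t) * g (- t)) x w"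
    if "real N * x $ i \<in> \<int>" for x w
  proof (rule same_stft_magnitude_if_reflection)
    show "(\<lambda>t. (1 + s t) * g (- t)) \<in> borel_measurable lebesgue"
      using L2(1) by (simp add: L2_real_def)
    show "(1 + s (x - t)) * g (- (x - t)) * g (- t) = (1 - s t) * g (- t) * g (t - x)" for t
      using sin_grid_reflect[OF that, of t] by (simp add: s_def)
  qed measurable
  show "\<not> phase_equivalent (\<lambda>t. (1 + s t) * g (- t)) (\<lambda>t. (1 - s t) * g (- t))"
  proof
    assume "phase_equivalent (\<lambda>t. (1 + s t) * g (- t)) (\<lambda>t. (1 - s t) * g (- t))"
    then obtain \<nu> where "cmod \<nu> = 1"
      and "AE t in lebesgue. complex_of_real ((1 + s t) * g (- t)) = \<nu> * complex_of_real ((1 - s t) * g (- t))"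
      by (auto simp: phase_equivalent_def)
    then have "AE t in lebesgue. g (- t) = 0 \<or> s t = 0"
      by (auto elim!: eventually_mono dest: unimodular_plus_minus_multiple)
    then have "AE t in lebesgue. g (0 - t) = 0"
      using AE_sin_grid_nonzero[OF assms(3), of i] by eventually_elim (simp add: s_def)
    then have "AE t in lebesgue. g t = 0"
      by (subst (asm) AE_lebesgue_reflect_iff) auto
    with assms(2) show False
      by contradiction
  qed
qed

lemma phase_retrieval_fails_on_grid:
  fixes g :: "real^'n \<Rightarrow> real"
  assumes "L2_real g" and "N > 0"
  shows "\<exists>f1 f2. L2_real f1 \<and> L2_real f2
           \<and> (\<forall>x w. real N * x $ i \<in> \<int> \<longrightarrow> same_stft_magnitude g f1 f2 x w)
           \<and> \<not> phase_equivalent f1 f2"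
proof (cases "AE t in lebesgue. g t = 0")
  case True
  with assms(1) show ?thesis
    using phase_retrieval_fails_null_window[of g] by (auto simp: L2_real_def)
next
  case False
  show ?thesis
    by (rule phase_retrieval_fails_on_grid_nonnull_window[OF assms(1) False assms(2)])
qed

theorem theorem1p6:
  fixes L :: "real^('n::finite + 'n)^('n + 'n)"
    and g :: "real^'n \<Rightarrow> real"
  assumes "invertible L"
    and "\<forall>i j. L $ i $ j \<in> \<rat>"
    and "L2_real g"
  shows "\<exists>f1 f2 :: real^'n \<Rightarrow> real. L2_real f1 \<and> L2_real f2 \<and>
           (\<forall>k :: real^('n + 'n). (\<forall>i. k $ i \<in> \<int>) \<longrightarrow>
              (let z = L *v k in
                 cmod (stft (\<lambda>t. complex_of_real (g t)) (\<lambda>t. complex_of_real (f1 t)) (xpart z) (wpart z))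
               = cmod (stft (\<lambda>t. complex_of_real (g t)) (\<lambda>t. complex_of_real (f2 t)) (xpart z) (wpart z)))) \<and>
           \<not> (\<exists>\<nu>::complex. cmod \<nu> = 1 \<and>
                 (AE t in lebesgue. complex_of_real (f1 t) = \<nu> * complex_of_real (f2 t)))"
proof -
  fix i :: 'n
  obtain N :: nat where "N > 0" and N: "\<And>j. real N * L $ Inl i $ j \<in> \<int>"
    using common_denominator[of "\<lambda>j. L $ Inl i $ j"] assms(2) by blast
  have on_grid: "real N * xpart (L *v k) $ i \<in> \<int>" if "\<forall>j. k $ j \<in> \<int>" for k
    using Ints_mult_matrix_vector_row[OF N] that by (simp add: xpart_def)
  obtain f1 f2 where "L2_real f1" "L2_real f2" and "\<not> phase_equivalent f1 f2"
    and "\<And>x w. real N * x $ i \<in> \<int> \<Longrightarrow> same_stft_magnitude g f1 f2 x w"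
    using phase_retrieval_fails_on_grid[OF assms(3) \<open>N > 0\<close>, of i] by blast
  with on_grid show ?thesis
    unfolding Let_def same_stft_magnitude_def[symmetric] phase_equivalent_def[symmetric] by blast
qed

end
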